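(* In the one-shot wage theft problem described in the context, fix an effort level $a\in[0,1)$ and let $(w_H^*,w_L^* )$ be the promised wages of an optimal solution of the problem restricted to effort level $a$. Then, with these wages and effort fixed, choosing thefts $b_i^*=\min\{\beta,w_i^*\}$ for $i\in\{H,L\}$ maximizes the employer's profit over all $b_H,b_L$ with $0\le b_i\le w_i^*$. Furthermore, if $a\in(0,1)$, then $b_i^*=\min\{\beta,w_i^*\}$, $i\in\{H,L\}$, is the unique optimal wage theft.
   Context: Fix $P>0$, $y_H>y_L\ge 0$, a real number $u$ (reservation utility) and $\gamma\in(0,1]$ (inspection probability). Let $C:[0,1)\to\mathbb{R}$ be the worker's effort cost: $C(0)=0$, $C$ increasing, strictly convex, twice differentiable, $C(a)\to\infty$ as $a\to1$. Let $\eta:[0,\infty)\to\mathbb{R}$ be the penalty: strictly convex, increasing, twice differentiable, $\eta(0)=0$. The one-shot wage theft problem is: choose $a,w_H,w_L,b_H,b_L$ to maximize the employer profit $a\,(Py_H-w_H+b_H-\gamma\eta(b_H))+(1-a)\,(Py_L-w_L+b_L-\gamma\eta(b_L))$ subject to (incentive compatibility) $a\in\arg\max_{a'\in[0,1)}\{a'w_H+(1-a')w_L-C(a')\}$; (individual rationality) $a w_H+(1-a)w_L-C(a)\ge u$; $w_H,w_L\ge 0$; $0\le b_L\le w_L$, $0\le b_H\le w_H$; $a\in[0,1)$. The problem restricted to effort level $a$ is the same problem with $a$ fixed. The principal's ideal wage theft $\beta\ge 0$ is the value with $\gamma\eta'(\beta)=1$ (assumed to exist). *)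

theory Defs
  imports "HOL-Analysis.Analysis"
begin

definition strictly_convex_on :: "real set \<Rightarrow> (real \<Rightarrow> real) \<Rightarrow> bool" where
  "strictly_convex_on S f \<longleftrightarrow> convex S \<and>
     (\<forall>x\<in>S. \<forall>y\<in>S. \<forall>t. x \<noteq> y \<and> 0 < t \<and> t < 1 \<longrightarrow>
        f ((1 - t) * x + t * y) < (1 - t) * f x + t * f y)"

definition profit ::
  "real \<Rightarrow> real \<Rightarrow> real \<Rightarrow> real \<Rightarrow> (real \<Rightarrow> real) \<Rightarrow>
   real \<Rightarrow> real \<Rightarrow> real \<Rightarrow> real \<Rightarrow> real \<Rightarrow> real" where
  "profit P yH yL \<gamma> \<eta> a wH wL bH bL =
     a * (P * yH - wH + bH - \<gamma> * \<eta> bH) + (1 - a) * (P * yL - wL + bL - \<gamma> * \<eta> bL)"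

text \<open>Feasibility for the problem restricted to effort level a
  (incentive compatibility, individual rationality, wage and theft bounds).\<close>
definition feasible_at ::
  "(real \<Rightarrow> real) \<Rightarrow> real \<Rightarrow> real \<Rightarrow> real \<Rightarrow> real \<Rightarrow> real \<Rightarrow> real \<Rightarrow> bool" where
  "feasible_at C u a wH wL bH bL \<longleftrightarrow>
     a \<in> {0..<1} \<and>
     (\<forall>a'\<in>{0..<1}. a' * wH + (1 - a') * wL - C a' \<le> a * wH + (1 - a) * wL - C a) \<and>
     a * wH + (1 - a) * wL - C a \<ge> u \<and>
     wH \<ge> 0 \<and> wL \<ge> 0 \<and> 0 \<le> bL \<and> bL \<le> wL \<and> 0 \<le> bH \<and> bH \<le> wH"

definition optimal_at ::
  "real \<Rightarrow> real \<Rightarrow> real \<Rightarrow> real \<Rightarrow> (real \<Rightarrow> real) \<Rightarrow> (real \<Rightarrow> real) \<Rightarrow> real \<Rightarrow>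
   real \<Rightarrow> real \<Rightarrow> real \<Rightarrow> real \<Rightarrow> real \<Rightarrow> bool" where
  "optimal_at P yH yL \<gamma> \<eta> C u a wH wL bH bL \<longleftrightarrow>
     feasible_at C u a wH wL bH bL \<and>
     (\<forall>wH' wL' bH' bL'. feasible_at C u a wH' wL' bH' bL' \<longrightarrow>
        profit P yH yL \<gamma> \<eta> a wH' wL' bH' bL' \<le> profit P yH yL \<gamma> \<eta> a wH wL bH bL)"

end

theory Submission imports Defs begin

text \<open>For fixed wages and effort the profit depends on the thefts only through
  \<open>a * k bH + (1 - a) * k bL\<close>, where \<open>k b = \<gamma> * \<eta> b - b\<close> is the expected penalty
  minus the amount stolen. \<open>k\<close> is strictly convex with \<open>k' \<beta> = 0\<close>, so \<open>\<beta>\<close> is its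
  unique minimiser on \<open>[0, \<infinity>)\<close> and \<open>min \<beta> w\<close> its unique minimiser on \<open>[0, w]\<close>.
  Hence the two thefts are optimised separately, and when both weights \<open>a\<close> and
  \<open>1 - a\<close> are positive every other choice loses strictly.\<close>

lemma strictly_convex_onD:
  assumes "strictly_convex_on S f" "x \<in> S" "y \<in> S" "x \<noteq> y" "0 < t" "t < 1"
  shows "f ((1 - t) * x + t * y) < (1 - t) * f x + t * f y"
  using assms by (simp add: strictly_convex_on_def)

lemma strictly_convex_on_imp_convex_on:
  assumes "strictly_convex_on S f"
  shows "convex_on S f"
  unfolding convex_on_def
proof (intro conjI ballI allI impI)
  show "convex S" using assms by (simp add: strictly_convex_on_def)
  fix x y u v :: real
  assume xy: "x \<in> S" "y \<in> S" and uv: "0 \<le> u" "0 \<le> v" "u + v = 1"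
  show "f (u *\<^sub>R x + v *\<^sub>R y) \<le> u * f x + v * f y"
  proof (cases "x = y \<or> u = 0 \<or> v = 0")
    case True
    with uv show ?thesis by (auto simp flip: distrib_right)
  next
    case False
    with uv have "f ((1 - v) * x + v * y) < (1 - v) * f x + v * f y"
      by (intro strictly_convex_onD[OF assms xy]) auto
    then show ?thesis using uv by (simp add: eq_diff_eq[symmetric])
  qed
qed

lemma convex_on_imp_above_tangent_within:
  fixes f :: "real \<Rightarrow> real"
  assumes conv: "convex_on S f" and c: "c \<in> S" and x: "x \<in> S"
    and deriv: "(f has_real_derivative D) (at c within S)"
  shows "D * (x - c) \<le> f x - f c"
proof -
  define h where "h t = (1 - t) * c + t * x" for t
  have h_in_S: "h ` {0..1} \<subseteq> S"
    using convexD[OF convex_on_imp_convex[OF conv] c x] by (auto simp: h_def)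
  have "(f has_real_derivative D) (at (h 0) within h ` {0..1})"
    using DERIV_subset[OF deriv h_in_S] by (simp add: h_def)
  moreover have "(h has_real_derivative x - c) (at 0 within {0..1})"
    unfolding h_def by (auto intro!: derivative_eq_intros)
  ultimately have "(f \<circ> h has_real_derivative D * (x - c)) (at 0 within {0..1})"
    by (rule DERIV_image_chain)
  then have "((\<lambda>t. (f (h t) - f c) / t) \<longlongrightarrow> D * (x - c)) (at_right 0)"
    by (simp add: has_field_derivative_iff at_within_Icc_at_right h_def)
  moreover have "\<forall>\<^sub>F t in at_right 0. (f (h t) - f c) / t \<le> f x - f c"
    using eventually_at_right_real[OF zero_less_one]
  proof eventually_elim
    case (elim t)
    then have "f (h t) \<le> (1 - t) * f c + t * f x"
      using convex_onD[OF conv, of t c x] c x by (simp add: h_def)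
    then have "f (h t) - f c \<le> (f x - f c) * t"
      by (simp add: algebra_simps)
    with elim show ?case by (simp add: pos_divide_le_eq)
  qed
  ultimately show ?thesis by (rule tendsto_upperbound) simp
qed

lemma strictly_convex_on_imp_strictly_above_tangent_within:
  fixes f :: "real \<Rightarrow> real"
  assumes conv: "strictly_convex_on S f" and c: "c \<in> S" and x: "x \<in> S" "x \<noteq> c"
    and deriv: "(f has_real_derivative D) (at c within S)"
  shows "D * (x - c) < f x - f c"
proof -
  define z where "z = (1 - 1/2) * c + (1/2) * x"
  have "z \<in> S"
    using convexD[of S c x "1/2" "1/2"] conv c x by (simp add: z_def strictly_convex_on_def)
  then have "D * (z - c) \<le> f z - f c"
    by (rule convex_on_imp_above_tangent_within[OF strictly_convex_on_imp_convex_on[OF conv] c _ deriv])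
  moreover have "f z < (1 - 1/2) * f c + (1/2) * f x"
    unfolding z_def by (rule strictly_convex_onD[OF conv c x(1) x(2)[symmetric]]) auto
  ultimately show ?thesis by (simp add: z_def field_simps)
qed

lemma strictly_convex_on_less_max:
  fixes f :: "real \<Rightarrow> real"
  assumes conv: "strictly_convex_on S f" and "x \<in> S" "y \<in> S" "x < z" "z < y"
  shows "f z < max (f x) (f y)"
proof -
  define t where "t = (z - x) / (y - x)"
  have t: "0 < t" "t < 1" and "t * (y - x) = z - x"
    using assms by (auto simp: t_def field_simps)
  then have "z = (1 - t) * x + t * y" by (simp add: algebra_simps)
  then have "f z < (1 - t) * f x + t * f y"
    using strictly_convex_onD[OF conv \<open>x \<in> S\<close> \<open>y \<in> S\<close> _ t] assms by simp
  also have "\<dots> \<le> (1 - t) * max (f x) (f y) + t * max (f x) (f y)"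
    using t by (intro add_mono mult_left_mono) auto
  finally show ?thesis by (simp add: algebra_simps)
qed

lemma strictly_convex_on_min_argmin_less:
  fixes f :: "real \<Rightarrow> real"
  assumes conv: "strictly_convex_on S f" and \<beta>: "\<beta> \<in> S"
    and argmin: "\<And>x. x \<in> S \<Longrightarrow> x \<noteq> \<beta> \<Longrightarrow> f \<beta> < f x"
    and c: "c \<in> S" "c \<le> w" "c \<noteq> min \<beta> w"
  shows "f (min \<beta> w) < f c"
proof (cases "\<beta> \<le> w")
  case True
  with argmin c show ?thesis by simp
next
  case False
  with c have "c < w" "w < \<beta>" by auto
  then have "f w < max (f c) (f \<beta>)"
    by (rule strictly_convex_on_less_max[OF conv c(1) \<beta>])
  also have "\<dots> = f c"
    using argmin[OF c(1)] \<open>c < w\<close> \<open>w < \<beta>\<close> by simp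
  finally show ?thesis using False by simp
qed

lemma strictly_convex_on_scaled_minus_id:
  assumes "strictly_convex_on S \<eta>" "\<gamma> > 0"
  shows "strictly_convex_on S (\<lambda>b. \<gamma> * \<eta> b - b)"
  unfolding strictly_convex_on_def
proof (intro conjI ballI allI impI)
  show "convex S" using assms(1) by (simp add: strictly_convex_on_def)
  fix x y t :: real
  assume "x \<in> S" "y \<in> S" and "x \<noteq> y \<and> 0 < t \<and> t < 1"
  then have "\<gamma> * \<eta> ((1 - t) * x + t * y) < \<gamma> * ((1 - t) * \<eta> x + t * \<eta> y)"
    using strictly_convex_onD[OF assms(1)] assms(2) by simp
  then show "\<gamma> * \<eta> ((1 - t) * x + t * y) - ((1 - t) * x + t * y)
      < (1 - t) * (\<gamma> * \<eta> x - x) + t * (\<gamma> * \<eta> y - y)"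
    by (simp add: algebra_simps)
qed

definition net_penalty :: "real \<Rightarrow> (real \<Rightarrow> real) \<Rightarrow> real \<Rightarrow> real" where
  "net_penalty \<gamma> \<eta> b = \<gamma> * \<eta> b - b"

lemma profit_eq_minus_net_penalty:
  "profit P yH yL \<gamma> \<eta> a wH wL bH bL =
     a * (P * yH - wH) + (1 - a) * (P * yL - wL)
       - (a * net_penalty \<gamma> \<eta> bH + (1 - a) * net_penalty \<gamma> \<eta> bL)"
  unfolding profit_def net_penalty_def by (simp add: algebra_simps)

lemma net_penalty_min_ideal_less:
  assumes conv: "strictly_convex_on {0..} \<eta>" and \<gamma>: "\<gamma> > 0"
    and deriv: "(\<eta> has_real_derivative D) (at \<beta> within {0..})"
    and \<beta>: "\<beta> \<ge> 0" "\<gamma> * D = 1" and c: "0 \<le> c" "c \<le> w" "c \<noteq> min \<beta> w"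
  shows "net_penalty \<gamma> \<eta> (min \<beta> w) < net_penalty \<gamma> \<eta> c"
proof -
  let ?k = "net_penalty \<gamma> \<eta>"
  have k_conv: "strictly_convex_on {0..} ?k"
    unfolding net_penalty_def[abs_def] by (rule strictly_convex_on_scaled_minus_id[OF conv \<gamma>])
  have "(?k has_real_derivative \<gamma> * D - 1) (at \<beta> within {0..})"
    unfolding net_penalty_def[abs_def] using deriv by (auto intro!: derivative_eq_intros)
  then have k_deriv: "(?k has_real_derivative 0) (at \<beta> within {0..})"
    using \<beta>(2) by simp
  have "?k \<beta> < ?k x" if "x \<in> {0..}" "x \<noteq> \<beta>" for x
    using strictly_convex_on_imp_strictly_above_tangent_within[OF k_conv _ that k_deriv] \<beta>(1)
    by simp
  then show ?thesis
    using strictly_convex_on_min_argmin_less[OF k_conv _ _ _ c(2,3)] \<beta>(1) c(1) by simp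
qed

lemma net_penalty_min_ideal_le:
  assumes "strictly_convex_on {0..} \<eta>" "\<gamma> > 0"
    and "(\<eta> has_real_derivative D) (at \<beta> within {0..})"
    and "\<beta> \<ge> 0" "\<gamma> * D = 1" "0 \<le> c" "c \<le> w"
  shows "net_penalty \<gamma> \<eta> (min \<beta> w) \<le> net_penalty \<gamma> \<eta> c"
  using net_penalty_min_ideal_less[OF assms] by fastforce

theorem proposition1:
  fixes P yH yL u \<gamma> \<beta> a wH wL bH bL :: real
    and C C' C'' \<eta> \<eta>' \<eta>'' :: "real \<Rightarrow> real"
  assumes P: "P > 0"
    and y: "yH > yL" "yL \<ge> 0"
    and \<gamma>: "0 < \<gamma>" "\<gamma> \<le> 1"
    and C0: "C 0 = 0"
    and C_incr: "strict_mono_on {0..<1} C"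
    and C_conv: "strictly_convex_on {0..<1} C"
    and C_d1: "\<And>x. x \<in> {0..<1} \<Longrightarrow> (C has_real_derivative C' x) (at x within {0..<1})"
    and C_d2: "\<And>x. x \<in> {0..<1} \<Longrightarrow> (C' has_real_derivative C'' x) (at x within {0..<1})"
    and C_lim: "filterlim C at_top (at_left 1)"
    and \<eta>0: "\<eta> 0 = 0"
    and \<eta>_incr: "strict_mono_on {0..} \<eta>"
    and \<eta>_conv: "strictly_convex_on {0..} \<eta>"
    and \<eta>_d1: "\<And>x. x \<ge> 0 \<Longrightarrow> (\<eta> has_real_derivative \<eta>' x) (at x within {0..})"
    and \<eta>_d2: "\<And>x. x \<ge> 0 \<Longrightarrow> (\<eta>' has_real_derivative \<eta>'' x) (at x within {0..})"
    and \<beta>: "\<beta> \<ge> 0" "\<gamma> * \<eta>' \<beta> = 1"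
    and a: "a \<in> {0..<1}"
    and opt: "optimal_at P yH yL \<gamma> \<eta> C u a wH wL bH bL"
  shows "(\<forall>bH' bL'. 0 \<le> bH' \<and> bH' \<le> wH \<and> 0 \<le> bL' \<and> bL' \<le> wL \<longrightarrow>
            profit P yH yL \<gamma> \<eta> a wH wL bH' bL'
              \<le> profit P yH yL \<gamma> \<eta> a wH wL (min \<beta> wH) (min \<beta> wL))
       \<and> (0 < a \<longrightarrow>
          (\<forall>bH' bL'. 0 \<le> bH' \<and> bH' \<le> wH \<and> 0 \<le> bL' \<and> bL' \<le> wL \<and>
             profit P yH yL \<gamma> \<eta> a wH wL bH' bL'
               = profit P yH yL \<gamma> \<eta> a wH wL (min \<beta> wH) (min \<beta> wL)
             \<longrightarrow> bH' = min \<beta> wH \<and> bL' = min \<beta> wL))"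
proof -
  let ?k = "net_penalty \<gamma> \<eta>" and ?profit = "profit P yH yL \<gamma> \<eta> a wH wL"
  note k_less = net_penalty_min_ideal_less[OF \<eta>_conv \<gamma>(1) \<eta>_d1[OF \<beta>(1)] \<beta>]
  note k_le = net_penalty_min_ideal_le[OF \<eta>_conv \<gamma>(1) \<eta>_d1[OF \<beta>(1)] \<beta>]
  have "0 \<le> a" "0 < 1 - a" using a by auto
  have weighted_le: "a * ?k (min \<beta> wH) \<le> a * ?k bH'" "(1 - a) * ?k (min \<beta> wL) \<le> (1 - a) * ?k bL'"
    if "0 \<le> bH'" "bH' \<le> wH" "0 \<le> bL'" "bL' \<le> wL" for bH' bL'
    using k_le[OF that(1,2)] k_le[OF that(3,4)] \<open>0 \<le> a\<close> \<open>0 < 1 - a\<close>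
    by (auto intro: mult_left_mono)
  have optimal: "?profit bH' bL' \<le> ?profit (min \<beta> wH) (min \<beta> wL)"
    if "0 \<le> bH'" "bH' \<le> wH" "0 \<le> bL'" "bL' \<le> wL" for bH' bL'
    using weighted_le[OF that] unfolding profit_eq_minus_net_penalty by linarith
  have unique: "bH' = min \<beta> wH \<and> bL' = min \<beta> wL"
    if "0 < a" "0 \<le> bH'" "bH' \<le> wH" "0 \<le> bL'" "bL' \<le> wL"
      and "?profit bH' bL' = ?profit (min \<beta> wH) (min \<beta> wL)" for bH' bL'
  proof (rule ccontr)
    assume "\<not> ?thesis"
    then have "a * ?k (min \<beta> wH) < a * ?k bH' \<or> (1 - a) * ?k (min \<beta> wL) < (1 - a) * ?k bL'"
      using k_less[OF that(2,3)] k_less[OF that(4,5)] \<open>0 < a\<close> \<open>0 < 1 - a\<close> by auto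
    with weighted_le[OF that(2-5)] that(6) show False
      unfolding profit_eq_minus_net_penalty by linarith
  qed
  show ?thesis using optimal unique by blast
qed

end
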